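(* Assume $\alpha>\beta+1$, $\beta\ge0$, $\theta>0$, and $\alpha-\beta-1\ge4\theta(\beta+1)$. Let $\rho\in\mathbb R$, let $u(\cdot,\rho)$ be the solution on $[0,\infty)$ of $L(u)+e^{u}=0$, $u(0)=\rho$, $u'(0)=0$, and let $u^*(r)=\ln\{\theta^{\beta+1}(\alpha-\beta-1)\}-\theta\ln r$. Then $u(r,\rho)\neq u^*(r)$ for all $r>0$.
   Context: $L(u)(r)=r^{-\gamma}(r^{\alpha}|u'(r)|^{\beta}u'(r))'$ and $\theta=\gamma+2+\beta-\alpha$. For the $k$-Hessian ($\alpha=d-k$, $\beta=k-1$, $\gamma=d-1$) the condition reads $d\ge 2k+8k^2$. *)

theory Defs
  imports Complex_Main
begin

text \<open>Radial quasilinear operator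
  L(u)(r) = r^(-gamma) (r^alpha |u'(r)|^beta u'(r))'.
  A (classical) solution on [0,oo) of L(u) + e^u = 0 with u(0) = rho, u'(0) = 0:
  u is differentiable on [0,oo) (one-sided at 0) with derivative du, du 0 = 0,
  u 0 = rho, and for every r > 0 the flux r^alpha |du r|^beta du r is differentiable
  with derivative -r^gamma e^(u r), i.e. L(u)(r) + e^(u r) = 0.\<close>

definition flux :: "real \<Rightarrow> real \<Rightarrow> (real \<Rightarrow> real) \<Rightarrow> real \<Rightarrow> real" where
  "flux \<alpha> \<beta> du r = r powr \<alpha> * (\<bar>du r\<bar> powr \<beta> * du r)"

definition is_solution :: "real \<Rightarrow> real \<Rightarrow> real \<Rightarrow> real \<Rightarrow> (real \<Rightarrow> real) \<Rightarrow> bool" where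
  "is_solution \<alpha> \<beta> \<gamma> \<rho> u \<longleftrightarrow>
     (\<exists>du. (\<forall>r\<ge>0. (u has_real_derivative du r) (at r within {0..}))
        \<and> u 0 = \<rho> \<and> du 0 = 0
        \<and> (\<forall>r>0. (flux \<alpha> \<beta> du has_real_derivative (- (r powr \<gamma>) * exp (u r))) (at r)))"

end

theory Submission
  imports Defs "HOL-Analysis.Analysis"
begin

(* With q = beta + 1, a = alpha - beta - 1, B = theta^q, put W = u - u^* and phi = - r u',
   Phi = phi^q. The flux is negative (otherwise u' >= K / r near 0, contradicting continuity
   of u at 0), so phi > 0, and the equation becomes r W' = theta - phi, r Phi' = a (B e^W - Phi):
   an autonomous planar system in log r whose equilibrium (0, B) is the singular solution u^*.
   Since W -> -oo at 0, a first zero r1 of W would satisfy Phi r1 <= B. Phi r1 < B is excluded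
   by the barrier Phi - B - 2 B W, which cannot reach 0 from above while W < 0 as long as
   a >= 4 theta; Phi r1 = B would mean reaching the equilibrium in finite time, excluded by
   Groenwall's inequality for W^2 + (Phi - B)^2. *)

lemma add_one_less_exp:
  fixes x :: real
  assumes "x \<noteq> 0"
  shows "1 + x < exp x"
proof (cases "1 + x / 2 \<ge> 0")
  case True
  have "0 < x\<^sup>2"
    using assms by simp
  then have "1 + x < (1 + x / 2)\<^sup>2"
    by (simp add: power2_eq_square algebra_simps)
  also have "\<dots> \<le> exp (x / 2) ^ 2"
    using True exp_ge_add_one_self[of "x / 2"] by (intro power_mono) auto
  also have "\<dots> = exp x"
    by (simp add: exp_double[symmetric])
  finally show ?thesis .
next
  case False
  then show ?thesis
    using exp_gt_zero[of x] by linarith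
qed

lemma powr_mult_abs_diff_le_abs_powr_diff:
  fixes t x q :: real
  assumes "0 < t" "0 < x" "1 \<le> q"
  shows "t powr (q - 1) * \<bar>x - t\<bar> \<le> \<bar>x powr q - t powr q\<bar>"
proof -
  have split_powr: "y powr q = y powr (q - 1) * y" if "0 < y" for y :: real
    using that powr_add[of y "q - 1" 1] by simp
  show ?thesis
  proof (cases "t \<le> x")
    case True
    have "t powr (q - 1) \<le> x powr (q - 1)"
      using True assms by (intro powr_mono2) auto
    then have "t powr (q - 1) * (x - t) \<le> x powr (q - 1) * x - t powr (q - 1) * t"
      using assms by (simp add: algebra_simps mult_right_mono)
    then show ?thesis
      using True assms by (simp add: split_powr)
  next
    case False
    have "x powr (q - 1) \<le> t powr (q - 1)"
      using False assms by (intro powr_mono2) auto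
    then have "t powr (q - 1) * (t - x) \<le> t powr (q - 1) * t - x powr (q - 1) * x"
      using assms by (simp add: algebra_simps mult_right_mono)
    then show ?thesis
      using False assms by (simp add: split_powr)
  qed
qed

lemma exists_least_root:
  fixes f :: "real \<Rightarrow> real"
  assumes "a \<le> b" "continuous_on {a..b} f" "f a < 0" "0 \<le> f b"
  obtains r where "a < r" "r \<le> b" "f r = 0" "\<And>x. a \<le> x \<Longrightarrow> x < r \<Longrightarrow> f x < 0"
proof -
  define Z where "Z = {x \<in> {a..b}. f x = 0}"
  have "closed Z"
    unfolding Z_def using assms(2) by (rule continuous_closed_preimage_constant) simp
  then have "compact Z"
    using compact_Int_closed[OF compact_Icc, of Z a b] by (simp add: Z_def Int_absorb1 subset_iff)
  moreover obtain y where "a \<le> y" "y \<le> b" "f y = 0"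
    using IVT'[of f a 0 b] assms by auto
  then have "Z \<noteq> {}"
    unfolding Z_def by auto
  ultimately obtain r where r: "r \<in> Z" and least: "\<And>x. x \<in> Z \<Longrightarrow> r \<le> x"
    using compact_attains_inf by meson
  have below: "f x < 0" if x: "a \<le> x" "x < r" for x
  proof (rule ccontr)
    assume "\<not> f x < 0"
    moreover have "continuous_on {a..x} f"
      using assms(2) by (rule continuous_on_subset) (use x r in \<open>auto simp: Z_def\<close>)
    ultimately obtain z where "a \<le> z" "z \<le> x" "f z = 0"
      using IVT'[of f a 0 x] assms(3) x by auto
    then show False
      using least[of z] x r by (auto simp: Z_def)
  qed
  have "a \<noteq> r"
    using r assms(3) by (auto simp: Z_def)
  with r have "a < r" "r \<le> b" "f r = 0"
    by (auto simp: Z_def)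
  then show ?thesis
    using that below by blast
qed

lemma DERIV_nonneg_if_le_on_left:
  fixes f :: "real \<Rightarrow> real"
  assumes "(f has_real_derivative D) (at r)" "0 < e" "\<And>x. r - e < x \<Longrightarrow> x < r \<Longrightarrow> f x \<le> f r"
  shows "0 \<le> D"
proof (rule ccontr)
  assume "\<not> 0 \<le> D"
  then obtain d where "0 < d" and dec: "\<And>h. 0 < h \<Longrightarrow> h < d \<Longrightarrow> f r < f (r - h)"
    using DERIV_neg_dec_left[OF assms(1)] by auto
  define h where "h = min d e / 2"
  have "f r < f (r - h)"
    using \<open>0 < d\<close> assms(2) by (intro dec) (auto simp: h_def)
  moreover have "f (r - h) \<le> f r"
    using \<open>0 < d\<close> assms(2) by (intro assms(3)) (auto simp: h_def)
  ultimately show False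
    by simp
qed

lemma gronwall_backward:
  fixes E E' :: "real \<Rightarrow> real"
  assumes "a \<le> b"
    and "\<And>x. a \<le> x \<Longrightarrow> x \<le> b \<Longrightarrow> (E has_real_derivative E' x) (at x)"
    and "\<And>x. a \<le> x \<Longrightarrow> x \<le> b \<Longrightarrow> - L * E x \<le> E' x"
  shows "E a * exp (L * a) \<le> E b * exp (L * b)"
proof (rule DERIV_nonneg_imp_nondecreasing[OF assms(1)])
  fix x assume x: "a \<le> x" "x \<le> b"
  have "((\<lambda>x. E x * exp (L * x)) has_real_derivative (E' x + L * E x) * exp (L * x)) (at x)"
    using assms(2)[OF x] by (auto intro!: derivative_eq_intros simp: algebra_simps)
  moreover have "0 \<le> (E' x + L * E x) * exp (L * x)"
    using assms(3)[OF x] by simp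
  ultimately show "\<exists>y. ((\<lambda>x. E x * exp (L * x)) has_real_derivative y) (at x) \<and> 0 \<le> y"
    by blast
qed

lemma not_continuous_if_deriv_ge_inverse:
  fixes u u' :: "real \<Rightarrow> real"
  assumes "0 < K" "0 < \<epsilon>"
    and deriv: "\<And>s. 0 < s \<Longrightarrow> s \<le> \<epsilon> \<Longrightarrow> (u has_real_derivative u' s) (at s)"
    and bound: "\<And>s. 0 < s \<Longrightarrow> s \<le> \<epsilon> \<Longrightarrow> K / s \<le> u' s"
  shows "\<not> continuous (at 0 within {0..}) u"
proof
  assume "continuous (at 0 within {0..}) u"
  then obtain \<eta> where "0 < \<eta>" and near: "\<And>x. 0 \<le> x \<Longrightarrow> x < \<eta> \<Longrightarrow> \<bar>u x - u 0\<bar> < K / 4"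
    using \<open>0 < K\<close> unfolding continuous_within_eps_delta dist_real_def
    by (metis atLeast_iff diff_zero divide_pos_pos zero_less_numeral abs_of_nonneg)
  define s where "s = min (\<eta> / 2) \<epsilon>"
  have s: "0 < s" "s < \<eta>" "s \<le> \<epsilon>"
    using \<open>0 < \<eta>\<close> \<open>0 < \<epsilon>\<close> by (auto simp: s_def)
  obtain z where z: "s / 2 < z" "z < s" and mvt: "u s - u (s / 2) = (s - s / 2) * u' z"
    using MVT2[of "s / 2" s u u'] s deriv by auto
  have "K / 2 \<le> s / 2 * (K / z)"
    using z s \<open>0 < K\<close> by (simp add: field_simps mult_left_mono)
  also have "\<dots> \<le> s / 2 * u' z"
    using z s bound[of z] by (intro mult_left_mono) auto
  finally have "K / 2 \<le> u s - u (s / 2)"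
    using mvt by simp
  moreover have "\<bar>u s - u 0\<bar> < K / 4" "\<bar>u (s / 2) - u 0\<bar> < K / 4"
    using near s by auto
  ultimately show False
    by linarith
qed

lemma energy_rate_lower_bound:
  fixes w t X e m a B :: real
  assumes "\<bar>t\<bar> \<le> m * \<bar>X\<bar>" "0 \<le> m" "0 < a" "0 < B" "\<bar>e - 1\<bar> \<le> \<bar>w\<bar>"
  shows "- ((m + a * B + 2 * a) * (w\<^sup>2 + X\<^sup>2)) \<le> 2 * w * t + 2 * a * X * (B * (e - 1) - X)"
proof -
  have am_gm: "2 * \<bar>w\<bar> * \<bar>X\<bar> \<le> w\<^sup>2 + X\<^sup>2"
    using sum_squares_bound[of "\<bar>w\<bar>" "\<bar>X\<bar>"] by simp
  have "\<bar>2 * w * t\<bar> \<le> m * (2 * \<bar>w\<bar> * \<bar>X\<bar>)"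
    using mult_left_mono[OF assms(1), of "2 * \<bar>w\<bar>"] by (simp add: abs_mult algebra_simps)
  also have "\<dots> \<le> m * (w\<^sup>2 + X\<^sup>2)"
    using am_gm assms(2) by (rule mult_left_mono)
  finally have first: "- (m * (w\<^sup>2 + X\<^sup>2)) \<le> 2 * w * t"
    by linarith
  have "\<bar>2 * a * B * X * (e - 1)\<bar> = 2 * a * B * (\<bar>X\<bar> * \<bar>e - 1\<bar>)"
    using assms(3,4) by (simp add: abs_mult)
  also have "\<dots> \<le> 2 * a * B * (\<bar>X\<bar> * \<bar>w\<bar>)"
    using assms(3,4,5) by (intro mult_left_mono) auto
  also have "\<dots> = a * B * (2 * \<bar>w\<bar> * \<bar>X\<bar>)"
    by simp
  also have "\<dots> \<le> a * B * (w\<^sup>2 + X\<^sup>2)"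
    using am_gm assms(3,4) by (intro mult_left_mono) auto
  finally have second: "- (a * B * (w\<^sup>2 + X\<^sup>2)) \<le> 2 * a * B * X * (e - 1)"
    by linarith
  have third: "- (2 * a * (w\<^sup>2 + X\<^sup>2)) \<le> - (2 * a * X\<^sup>2)"
    using assms(3) by simp
  show ?thesis
    using first second third by (simp add: power2_eq_square algebra_simps)
qed

lemma has_real_derivative_at_if_within_atLeast:
  fixes f :: "real \<Rightarrow> real"
  assumes "0 < r" "(f has_real_derivative D) (at r within {0..})"
  shows "(f has_real_derivative D) (at r)"
proof -
  have "at r within {0..} = at r"
    using assms(1) by (intro at_within_open_subset[of _ "{0<..}"]) auto
  then show ?thesis
    using assms(2) by simp
qed

lemma deriv_ge_of_flux_ge:
  fixes \<alpha> \<beta> \<delta> R s :: real and du :: "real \<Rightarrow> real"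
  assumes "\<beta> + 1 \<le> \<alpha>" "0 \<le> \<beta>" "0 < \<delta>" "0 < s" "s \<le> R" "\<delta> \<le> flux \<alpha> \<beta> du s"
  shows "\<delta> powr (1 / (\<beta> + 1)) * R powr (1 - \<alpha> / (\<beta> + 1)) / s \<le> du s"
proof -
  define q where "q = \<beta> + 1"
  have q: "1 \<le> q" "0 < q"
    using assms(2) by (auto simp: q_def)
  have "0 < du s"
  proof (rule ccontr)
    assume "\<not> 0 < du s"
    then have "flux \<alpha> \<beta> du s \<le> 0"
      by (simp add: flux_def mult_nonneg_nonpos)
    then show False
      using assms(3,6) by linarith
  qed
  then have "flux \<alpha> \<beta> du s = s powr \<alpha> * du s powr q"
    by (simp add: flux_def q_def powr_add)
  then have "\<delta> * s powr (- \<alpha>) \<le> du s powr q"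
    using assms(4,6) by (simp add: powr_minus field_simps)
  then have "(\<delta> * s powr (- \<alpha>)) powr (1 / q) \<le> (du s powr q) powr (1 / q)"
    using assms(3) q by (intro powr_mono2) auto
  also have "(du s powr q) powr (1 / q) = du s"
    using \<open>0 < du s\<close> q by (simp add: powr_powr)
  also have "(\<delta> * s powr (- \<alpha>)) powr (1 / q) = \<delta> powr (1 / q) * s powr (- \<alpha> / q)"
    using assms(3,4) by (simp add: powr_mult powr_powr)
  also have "s powr (- \<alpha> / q) = s powr (1 - \<alpha> / q) / s"
    using assms(4) by (simp add: powr_diff powr_minus_divide)
  finally have "\<delta> powr (1 / q) * (s powr (1 - \<alpha> / q) / s) \<le> du s" .
  moreover have "R powr (1 - \<alpha> / q) \<le> s powr (1 - \<alpha> / q)"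
    using assms(1,4,5) q by (intro powr_mono2') (auto simp: q_def field_simps)
  then have "\<delta> powr (1 / q) * (R powr (1 - \<alpha> / q) / s) \<le> \<delta> powr (1 / q) * (s powr (1 - \<alpha> / q) / s)"
    using assms(4) by (intro mult_left_mono divide_right_mono) auto
  ultimately show ?thesis
    by (simp add: q_def)
qed

lemma solution_flux_neg:
  fixes \<alpha> \<beta> \<gamma> r :: real and u du :: "real \<Rightarrow> real"
  assumes "\<beta> + 1 \<le> \<alpha>" "0 \<le> \<beta>"
    and deriv: "\<forall>r\<ge>0. (u has_real_derivative du r) (at r within {0..})"
    and flux_deriv: "\<forall>r>0. (flux \<alpha> \<beta> du has_real_derivative - (r powr \<gamma>) * exp (u r)) (at r)"
    and "0 < r"
  shows "flux \<alpha> \<beta> du r < 0"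
proof (rule ccontr)
  assume "\<not> flux \<alpha> \<beta> du r < 0"
  have decreasing: "flux \<alpha> \<beta> du y < flux \<alpha> \<beta> du x" if "0 < x" "x < y" for x y
  proof (rule DERIV_neg_imp_decreasing[OF that(2)])
    fix z assume "x \<le> z" "z \<le> y"
    then show "\<exists>D. (flux \<alpha> \<beta> du has_real_derivative D) (at z) \<and> D < 0"
      using flux_deriv that by (intro exI[of _ "- (z powr \<gamma>) * exp (u z)"]) auto
  qed
  define \<delta> where "\<delta> = flux \<alpha> \<beta> du (r / 2)"
  have "0 < \<delta>"
    using decreasing[of "r / 2" r] \<open>0 < r\<close> \<open>\<not> flux \<alpha> \<beta> du r < 0\<close> by (simp add: \<delta>_def)
  have "\<delta> \<le> flux \<alpha> \<beta> du s" if "0 < s" "s \<le> r / 2" for s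
    using decreasing[of s "r / 2"] that by (cases "s = r / 2") (auto simp: \<delta>_def)
  moreover define K where "K = \<delta> powr (1 / (\<beta> + 1)) * (r / 2) powr (1 - \<alpha> / (\<beta> + 1))"
  ultimately have "K / s \<le> du s" if "0 < s" "s \<le> r / 2" for s
    using deriv_ge_of_flux_ge[OF assms(1,2) \<open>0 < \<delta>\<close>] that by blast
  moreover have "(u has_real_derivative du s) (at s)" if "0 < s" for s
    using deriv that by (intro has_real_derivative_at_if_within_atLeast) auto
  moreover have "0 < K"
    using \<open>0 < \<delta>\<close> \<open>0 < r\<close> by (simp add: K_def)
  ultimately have "\<not> continuous (at 0 within {0..}) u"
    using \<open>0 < r\<close> not_continuous_if_deriv_ge_inverse[of K "r / 2" u du] by auto
  moreover have "continuous (at 0 within {0..}) u"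
    using deriv by (intro DERIV_continuous) auto
  ultimately show False
    by contradiction
qed

locale radial_phase_system =
  fixes \<theta> q a :: real and W \<phi> :: "real \<Rightarrow> real"
  assumes theta_pos: "0 < \<theta>" and one_le_q: "1 \<le> q" and four_theta_le_a: "4 * \<theta> \<le> a"
    and phi_pos: "\<And>r. 0 < r \<Longrightarrow> 0 < \<phi> r"
    and W_deriv: "\<And>r. 0 < r \<Longrightarrow> (W has_real_derivative (\<theta> - \<phi> r) / r) (at r)"
    and Phi_deriv: "\<And>r. 0 < r \<Longrightarrow>
      ((\<lambda>r. \<phi> r powr q) has_real_derivative a * (\<theta> powr q * exp (W r) - \<phi> r powr q) / r) (at r)"
begin

abbreviation B :: real where "B \<equiv> \<theta> powr q"

abbreviation Phi :: "real \<Rightarrow> real" where "Phi r \<equiv> \<phi> r powr q"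

lemma B_pos: "0 < B"
  using theta_pos by simp

lemma a_pos: "0 < a"
  using theta_pos four_theta_le_a by linarith

lemma theta_powr_mult_B: "\<theta> powr (1 - q) * B = \<theta>"
  using theta_pos by (simp add: powr_add[symmetric])

lemma abs_theta_minus_phi_le:
  assumes "0 < r"
  shows "\<bar>\<theta> - \<phi> r\<bar> \<le> \<theta> powr (1 - q) * \<bar>Phi r - B\<bar>"
proof -
  have "\<theta> powr (1 - q) * \<theta> powr (q - 1) = 1"
    using theta_pos by (simp add: powr_add[symmetric])
  then have "\<bar>\<theta> - \<phi> r\<bar> = \<theta> powr (1 - q) * (\<theta> powr (q - 1) * \<bar>\<phi> r - \<theta>\<bar>)"
    by (simp add: abs_minus_commute mult.assoc[symmetric])
  also have "\<dots> \<le> \<theta> powr (1 - q) * \<bar>Phi r - B\<bar>"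
    using powr_mult_abs_diff_le_abs_powr_diff[OF theta_pos phi_pos[OF assms] one_le_q]
    by (intro mult_left_mono) auto
  finally show ?thesis .
qed

lemma continuous_on_W:
  assumes "0 < x"
  shows "continuous_on {x..y} W"
proof (rule DERIV_atLeastAtMost_imp_continuous_on)
  fix z assume "x \<le> z" "z \<le> y"
  then have "0 < z"
    using assms by linarith
  then show "\<exists>D. (W has_real_derivative D) (at z)"
    using W_deriv by blast
qed

lemma continuous_on_Phi:
  assumes "0 < x"
  shows "continuous_on {x..y} Phi"
proof (rule DERIV_atLeastAtMost_imp_continuous_on)
  fix z assume "x \<le> z" "z \<le> y"
  then have "0 < z"
    using assms by linarith
  then show "\<exists>D. (Phi has_real_derivative D) (at z)"
    using Phi_deriv by blast
qed

lemma Phi_le_B_at_first_zero: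
  assumes "0 < r" "W r = 0" "\<And>x. 0 < x \<Longrightarrow> x < r \<Longrightarrow> W x < 0"
  shows "Phi r \<le> B"
proof -
  have "0 \<le> (\<theta> - \<phi> r) / r"
    using assms by (intro DERIV_nonneg_if_le_on_left[OF W_deriv[OF assms(1)] assms(1)]) force
  then have "\<phi> r \<le> \<theta>"
    using assms(1) by (simp add: zero_le_divide_iff)
  then show ?thesis
    using phi_pos[OF assms(1)] one_le_q by (intro powr_mono2) auto
qed

lemma barrier_deriv_pos:
  assumes "0 < r" "W r < 0" "Phi r = B + 2 * B * W r"
  shows "0 < a * (B * exp (W r) - Phi r) / r - 2 * B * ((\<theta> - \<phi> r) / r)"
proof -
  define w where "w = W r"
  have "\<theta> - \<phi> r \<le> \<theta> powr (1 - q) * \<bar>Phi r - B\<bar>"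
    using abs_theta_minus_phi_le[OF assms(1)] by linarith
  also have "\<bar>Phi r - B\<bar> = B * (- 2 * w)"
    using assms(2,3) B_pos by (simp add: w_def abs_if mult_pos_neg)
  finally have theta_bound: "\<theta> - \<phi> r \<le> 2 * \<theta> * (- w)"
    using theta_powr_mult_B by (simp add: mult.assoc[symmetric])
  have "2 * B * (\<theta> - \<phi> r) \<le> 4 * \<theta> * (B * (- w))"
    using mult_left_mono[OF theta_bound, of "2 * B"] B_pos by (simp add: algebra_simps)
  also have "\<dots> \<le> a * (B * (- w))"
  proof (rule mult_right_mono[OF four_theta_le_a])
    show "0 \<le> B * (- w)"
      using mult_pos_neg[OF B_pos assms(2)] by (simp add: w_def)
  qed
  also have "a * (B * (- w)) < a * (B * exp w - Phi r)"
  proof -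
    have "B * (1 + w) < B * exp w"
      using add_one_less_exp[of w] assms(2) B_pos by (simp add: w_def)
    then have "B * (- w) < B * exp w - Phi r"
      using assms(3) by (simp add: w_def algebra_simps)
    then show ?thesis
      using a_pos by (rule mult_strict_left_mono)
  qed
  finally have "0 < (a * (B * exp w - Phi r) - 2 * B * (\<theta> - \<phi> r)) / r"
    using assms(1) by simp
  moreover have "(a * (B * exp w - Phi r) - 2 * B * (\<theta> - \<phi> r)) / r
      = a * (B * exp (W r) - Phi r) / r - 2 * B * ((\<theta> - \<phi> r) / r)"
    using assms(1) by (simp add: w_def field_simps)
  ultimately show ?thesis
    by simp
qed

(* The barrier G = Phi - B - 2 B W is positive at delta and negative at r1; at its first zero
   its derivative would be positive. *)
lemma Phi_ge_B_at_first_zero: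
  assumes "0 < \<delta>" "\<delta> < r1" "W \<delta> \<le> -1" "W r1 = 0" "\<And>x. \<delta> \<le> x \<Longrightarrow> x < r1 \<Longrightarrow> W x < 0"
  shows "B \<le> Phi r1"
proof (rule ccontr)
  assume "\<not> B \<le> Phi r1"
  define G where "G x = Phi x - B - 2 * B * W x" for x
  have "0 < Phi \<delta>"
    using phi_pos[OF assms(1)] by simp
  moreover have "2 * B * W \<delta> \<le> - (2 * B)"
    using mult_left_mono[OF assms(3), of "2 * B"] B_pos by simp
  ultimately have "- G \<delta> < 0"
    unfolding G_def using B_pos by linarith
  moreover have "0 \<le> - G r1"
    using \<open>\<not> B \<le> Phi r1\<close> assms(4) by (simp add: G_def)
  moreover have "continuous_on {\<delta>..r1} (\<lambda>x. - G x)"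
    unfolding G_def
    by (intro continuous_on_minus continuous_on_diff continuous_on_mult continuous_on_const
        continuous_on_W[OF assms(1)] continuous_on_Phi[OF assms(1)])
  ultimately obtain r0 where r0: "\<delta> < r0" "r0 \<le> r1" "G r0 = 0"
    and G_pos: "\<And>x. \<delta> \<le> x \<Longrightarrow> x < r0 \<Longrightarrow> 0 < G x"
    using exists_least_root[of \<delta> r1 "\<lambda>x. - G x"] assms(2) by (metis less_imp_le neg_less_0_iff_less neg_equal_0_iff_equal)
  have "r0 \<noteq> r1"
    using r0(3) \<open>\<not> B \<le> Phi r1\<close> assms(4) by (auto simp: G_def)
  then have "W r0 < 0"
    using r0 assms(5) by simp
  have "0 < r0"
    using r0(1) assms(1) by simp
  have "((\<lambda>x. - G x) has_real_derivative
      - (a * (B * exp (W r0) - Phi r0) / r0 - 0 - 2 * B * ((\<theta> - \<phi> r0) / r0))) (at r0)"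
    unfolding G_def
    by (intro DERIV_minus DERIV_diff DERIV_cmult DERIV_const Phi_deriv W_deriv \<open>0 < r0\<close>)
  then have "0 \<le> - (a * (B * exp (W r0) - Phi r0) / r0 - 0 - 2 * B * ((\<theta> - \<phi> r0) / r0))"
  proof (rule DERIV_nonneg_if_le_on_left)
    show "0 < r0 - \<delta>"
      using r0(1) by simp
    show "- G x \<le> - G r0" if "r0 - (r0 - \<delta>) < x" "x < r0" for x
      using G_pos[of x] that r0(3) by simp
  qed
  moreover have "Phi r0 = B + 2 * B * W r0"
    using r0(3) by (simp add: G_def)
  ultimately show False
    using barrier_deriv_pos[OF \<open>0 < r0\<close> \<open>W r0 < 0\<close>] by linarith
qed


lemma equilibrium_backward_unique:
  assumes "0 < r0" "r0 \<le> r1" "\<And>x. r0 \<le> x \<Longrightarrow> x \<le> r1 \<Longrightarrow> W x \<le> 0"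
    and "W r1 = 0" "Phi r1 = B"
  shows "W r0 = 0"
proof -
  define C where "C = \<theta> powr (1 - q) + a * B + 2 * a"
  define E where "E x = (W x)\<^sup>2 + (Phi x - B)\<^sup>2" for x
  define E' where "E' x = 2 * W x * ((\<theta> - \<phi> x) / x)
    + 2 * (Phi x - B) * (a * (B * exp (W x) - Phi x) / x)" for x
  have E_deriv: "(E has_real_derivative E' x) (at x)" if "0 < x" for x
    unfolding E_def[abs_def] E'_def
    by (rule DERIV_cong[OF DERIV_add[OF DERIV_power[OF W_deriv[OF that], of 2]
          DERIV_power[OF DERIV_diff[OF Phi_deriv[OF that] DERIV_const[of B]], of 2]]])
      (simp add: algebra_simps)
  have E'_ge: "- (C / r0) * E x \<le> E' x" if x: "r0 \<le> x" "x \<le> r1" for x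
  proof -
    have "0 < x"
      using x assms(1) by linarith
    have exp_le: "exp (W x) - 1 \<le> 0"
      using assms(3)[OF x] by simp
    have "\<bar>exp (W x) - 1\<bar> \<le> \<bar>W x\<bar>"
      unfolding abs_of_nonpos[OF exp_le] abs_of_nonpos[OF assms(3)[OF x]]
      using exp_ge_add_one_self[of "W x"] by linarith
    then have "- (C * E x) \<le> 2 * W x * (\<theta> - \<phi> x) + 2 * a * (Phi x - B) * (B * (exp (W x) - 1) - (Phi x - B))"
      unfolding C_def E_def
      using abs_theta_minus_phi_le[OF \<open>0 < x\<close>] a_pos B_pos by (intro energy_rate_lower_bound) auto
    also have "\<dots> = x * E' x"
      using \<open>0 < x\<close> by (simp add: E'_def field_simps)
    finally have "- (C * E x) / x \<le> E' x"
      using \<open>0 < x\<close> by (simp add: field_simps)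
    moreover have "0 \<le> C * E x"
      using a_pos B_pos by (simp add: C_def E_def)
    then have "- (C * E x) / r0 \<le> - (C * E x) / x"
      using x assms(1) by (intro divide_left_mono_neg) auto
    ultimately show ?thesis
      by simp
  qed
  have "E r0 * exp (C / r0 * r0) \<le> E r1 * exp (C / r0 * r1)"
    using assms(1,2) E_deriv E'_ge by (intro gronwall_backward[where E' = E']) auto
  moreover have "E r1 = 0"
    using assms(4,5) by (simp add: E_def)
  ultimately have "E r0 \<le> 0"
    by (simp add: mult_le_0_iff)
  then show ?thesis
    unfolding E_def sum_power2_le_zero_iff by simp
qed

lemma W_neq_zero:
  assumes "filterlim W at_bot (at_right 0)" "0 < r"
  shows "W r \<noteq> 0"
proof
  assume "W r = 0"
  have "\<forall>\<^sub>F x in at_right 0. W x \<le> -1"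
    using assms(1) by (simp add: filterlim_at_bot)
  then obtain d where "0 < d" and W_below: "\<And>x. 0 < x \<Longrightarrow> x < d \<Longrightarrow> W x \<le> -1"
    by (auto simp: eventually_at_right_field)
  define \<delta> where "\<delta> = min (d / 2) (r / 2)"
  have \<delta>: "0 < \<delta>" "\<delta> < r" "\<delta> < d"
    using \<open>0 < d\<close> assms(2) by (auto simp: \<delta>_def)
  obtain r1 where r1: "\<delta> < r1" "r1 \<le> r" "W r1 = 0" and W_neg: "\<And>x. \<delta> \<le> x \<Longrightarrow> x < r1 \<Longrightarrow> W x < 0"
    using exists_least_root[of \<delta> r W] continuous_on_W[OF \<open>0 < \<delta>\<close>] W_below[of \<delta>] \<delta> \<open>W r = 0\<close>
    by auto
  have "W x < 0" if "0 < x" "x < r1" for x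
    using W_below[of x] W_neg[of x] that \<delta> by (cases "x < \<delta>") auto
  then have "Phi r1 = B"
    using Phi_le_B_at_first_zero[of r1] Phi_ge_B_at_first_zero[of \<delta> r1] r1 \<delta> W_below W_neg
    by fastforce
  then have "W \<delta> = 0"
    using equilibrium_backward_unique[of \<delta> r1] r1 \<delta> W_neg by fastforce
  then show False
    using W_below[of \<delta>] \<delta> by simp
qed

end

lemma neg_flux_eq_powr:
  fixes \<alpha> \<beta> r :: real and du :: "real \<Rightarrow> real"
  assumes "0 < r" "du r < 0"
  shows "- flux \<alpha> \<beta> du r = r powr (\<alpha> - \<beta> - 1) * (- r * du r) powr (\<beta> + 1)"
proof -
  have "(- r * du r) powr (\<beta> + 1) = r powr (\<beta> + 1) * (- du r) powr (\<beta> + 1)"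
    using powr_mult[of r "- du r" "\<beta> + 1"] assms by simp
  also have "(- du r) powr (\<beta> + 1) = (- du r) powr \<beta> * (- du r)"
    using assms(2) by (simp add: powr_add)
  finally have "r powr (\<alpha> - \<beta> - 1) * (- r * du r) powr (\<beta> + 1)
      = (r powr (\<alpha> - \<beta> - 1) * r powr (\<beta> + 1)) * ((- du r) powr \<beta> * (- du r))"
    by (simp add: mult_ac)
  also have "r powr (\<alpha> - \<beta> - 1) * r powr (\<beta> + 1) = r powr \<alpha>"
    by (simp add: powr_add[symmetric])
  finally show ?thesis
    using assms(2) by (simp add: flux_def)
qed

lemma solution_Phi_deriv:
  fixes \<alpha> \<beta> \<gamma> \<theta> r :: real and u du :: "real \<Rightarrow> real"
  defines "a \<equiv> \<alpha> - \<beta> - 1" and "B \<equiv> \<theta> powr (\<beta> + 1)"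
  assumes "\<theta> = \<gamma> + 2 + \<beta> - \<alpha>" "0 < a" "0 < \<theta>"
    and flux_deriv: "\<forall>r>0. (flux \<alpha> \<beta> du has_real_derivative - (r powr \<gamma>) * exp (u r)) (at r)"
    and du_neg: "\<And>r. 0 < r \<Longrightarrow> du r < 0"
    and "0 < r"
  shows "((\<lambda>r. (- r * du r) powr (\<beta> + 1)) has_real_derivative
    a * (B * exp (u r + \<theta> * ln r - ln (B * a)) - (- r * du r) powr (\<beta> + 1)) / r) (at r)"
proof -
  define Phi where "Phi = (\<lambda>r. (- r * du r) powr (\<beta> + 1))"
  have Phi_eq: "Phi x = - flux \<alpha> \<beta> du x * x powr (- a)" if "0 < x" for x
  proof -
    have "- flux \<alpha> \<beta> du x * x powr (- a) = (x powr a * x powr (- a)) * Phi x"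
      using neg_flux_eq_powr[of x du \<alpha> \<beta>] du_neg[OF that] that by (simp add: Phi_def a_def mult_ac)
    also have "x powr a * x powr (- a) = 1"
      using that by (simp add: powr_add[symmetric])
    finally show ?thesis
      by simp
  qed
  have "((\<lambda>x. - flux \<alpha> \<beta> du x * x powr (- a)) has_real_derivative
      r powr \<gamma> * exp (u r) * r powr (- a) + (- flux \<alpha> \<beta> du r) * (- a * r powr (- a - 1))) (at r)"
    using flux_deriv \<open>0 < r\<close>
    by (auto intro!: derivative_eq_intros simp: powr_diff)
  then have deriv: "(Phi has_real_derivative
      r powr \<gamma> * exp (u r) * r powr (- a) + (- flux \<alpha> \<beta> du r) * (- a * r powr (- a - 1))) (at r)"
    by (rule has_field_derivative_transform_within_open[of _ _ _ "{0<..}"]) (use \<open>0 < r\<close> Phi_eq in auto)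
  define w where "w = u r + \<theta> * ln r - ln (B * a)"
  have "exp (u r) = B * a * exp w * r powr (- \<theta>)"
    using \<open>0 < r\<close> assms(4,5) by (simp add: w_def exp_add exp_diff powr_def B_def exp_minus_inverse)
  then have "r powr \<gamma> * exp (u r) * r powr (- a) = B * a * exp w * (r powr \<gamma> * r powr (- \<theta>) * r powr (- a))"
    by (simp add: mult_ac)
  also have "r powr \<gamma> * r powr (- \<theta>) * r powr (- a) = 1 / r"
    using \<open>0 < r\<close> by (simp add: powr_add[symmetric] assms(3) a_def powr_minus_divide)
  finally have source: "r powr \<gamma> * exp (u r) * r powr (- a) = B * a * exp w / r"
    by simp
  have "(- flux \<alpha> \<beta> du r) * (- a * r powr (- a - 1)) = - a * ((- flux \<alpha> \<beta> du r) * r powr (- a)) / r"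
    using \<open>0 < r\<close> by (simp add: powr_diff)
  also have "\<dots> = - a * Phi r / r"
    using Phi_eq[OF \<open>0 < r\<close>] by simp
  finally have "r powr \<gamma> * exp (u r) * r powr (- a) + (- flux \<alpha> \<beta> du r) * (- a * r powr (- a - 1))
      = a * (B * exp w - Phi r) / r"
    using source \<open>0 < r\<close> by (simp add: field_simps)
  then show ?thesis
    using deriv by (simp add: Phi_def w_def)
qed

lemma solution_radial_phase_system:
  fixes \<alpha> \<beta> \<gamma> \<theta> :: real and u du :: "real \<Rightarrow> real"
  assumes "\<theta> = \<gamma> + 2 + \<beta> - \<alpha>" "\<beta> + 1 < \<alpha>" "0 \<le> \<beta>" "0 < \<theta>"
    and "4 * \<theta> * (\<beta> + 1) \<le> \<alpha> - \<beta> - 1"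
    and deriv: "\<forall>r\<ge>0. (u has_real_derivative du r) (at r within {0..})"
    and flux_deriv: "\<forall>r>0. (flux \<alpha> \<beta> du has_real_derivative - (r powr \<gamma>) * exp (u r)) (at r)"
  shows "radial_phase_system \<theta> (\<beta> + 1) (\<alpha> - \<beta> - 1)
    (\<lambda>r. u r + \<theta> * ln r - ln (\<theta> powr (\<beta> + 1) * (\<alpha> - \<beta> - 1))) (\<lambda>r. - r * du r)"
proof (unfold_locales)
  have du_neg: "du r < 0" if "0 < r" for r
  proof (rule ccontr)
    assume "\<not> du r < 0"
    then have "0 \<le> flux \<alpha> \<beta> du r"
      using that by (simp add: flux_def)
    then show False
      using solution_flux_neg[OF less_imp_le[OF assms(2)] assms(3) deriv flux_deriv that] by linarith
  qed
  show "0 < \<theta>" "1 \<le> \<beta> + 1"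
    using assms(3,4) by auto
  have "4 * \<theta> * 1 \<le> 4 * \<theta> * (\<beta> + 1)"
    using assms(3,4) by (intro mult_left_mono) auto
  then show "4 * \<theta> \<le> \<alpha> - \<beta> - 1"
    using assms(5) by linarith
  fix r :: real
  assume "0 < r"
  then show "0 < - r * du r"
    using du_neg[OF \<open>0 < r\<close>] by (simp add: mult_pos_neg)
  have "(u has_real_derivative du r) (at r)"
    using deriv \<open>0 < r\<close> by (intro has_real_derivative_at_if_within_atLeast) auto
  then have "((\<lambda>r. u r + \<theta> * ln r - ln (\<theta> powr (\<beta> + 1) * (\<alpha> - \<beta> - 1))) has_real_derivative
      du r + \<theta> * inverse r - 0) (at r)"
    by (intro DERIV_diff DERIV_add DERIV_cmult DERIV_ln DERIV_const \<open>0 < r\<close>)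
  moreover have "du r + \<theta> * inverse r - 0 = (\<theta> - - r * du r) / r"
    using \<open>0 < r\<close> by (simp add: field_simps)
  ultimately show "((\<lambda>r. u r + \<theta> * ln r - ln (\<theta> powr (\<beta> + 1) * (\<alpha> - \<beta> - 1))) has_real_derivative
      (\<theta> - - r * du r) / r) (at r)"
    by simp
  show "((\<lambda>r. (- r * du r) powr (\<beta> + 1)) has_real_derivative
      (\<alpha> - \<beta> - 1) * (\<theta> powr (\<beta> + 1) * exp (u r + \<theta> * ln r - ln (\<theta> powr (\<beta> + 1) * (\<alpha> - \<beta> - 1)))
        - (- r * du r) powr (\<beta> + 1)) / r) (at r)"
    using solution_Phi_deriv[OF assms(1) _ assms(4) flux_deriv du_neg \<open>0 < r\<close>] assms(2) by simp
qed

lemma filterlim_add_mult_ln_at_bot: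
  fixes f :: "real \<Rightarrow> real"
  assumes "(f \<longlongrightarrow> L) (at_right 0)" "0 < \<theta>"
  shows "filterlim (\<lambda>r. f r + \<theta> * ln r - c) at_bot (at_right 0)"
proof -
  have "filterlim (\<lambda>r. \<theta> * ln r) at_bot (at_right 0)"
    using filterlim_tendsto_pos_mult_at_bot[OF tendsto_const assms(2) ln_at_0] .
  then have "filterlim (\<lambda>r. (f r - c) + \<theta> * ln r) at_bot (at_right 0)"
    by (rule filterlim_tendsto_add_at_bot_iff[OF tendsto_diff[OF assms(1) tendsto_const], THEN iffD2])
  moreover have "(\<lambda>r. (f r - c) + \<theta> * ln r) = (\<lambda>r. f r + \<theta> * ln r - c)"
    by (simp add: fun_eq_iff)
  ultimately show ?thesis
    by simp
qed

theorem theorem1p7: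
  fixes \<alpha> \<beta> \<gamma> \<theta> \<rho> :: real and u :: "real \<Rightarrow> real"
  assumes h\<theta>def: "\<theta> = \<gamma> + 2 + \<beta> - \<alpha>"
    and h1: "\<alpha> > \<beta> + 1" and h2: "\<beta> \<ge> 0" and h3: "\<theta> > 0"
    and h4: "\<alpha> - \<beta> - 1 \<ge> 4 * \<theta> * (\<beta> + 1)"
    and hu: "is_solution \<alpha> \<beta> \<gamma> \<rho> u"
  shows "\<forall>r>0. u r \<noteq> ln (\<theta> powr (\<beta> + 1) * (\<alpha> - \<beta> - 1)) - \<theta> * ln r"
proof (intro allI impI)
  fix r :: real
  assume "0 < r"
  obtain du where deriv: "\<forall>r\<ge>0. (u has_real_derivative du r) (at r within {0..})"
    and flux_deriv: "\<forall>r>0. (flux \<alpha> \<beta> du has_real_derivative - (r powr \<gamma>) * exp (u r)) (at r)"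
    using hu unfolding is_solution_def by blast
  define W where "W r = u r + \<theta> * ln r - ln (\<theta> powr (\<beta> + 1) * (\<alpha> - \<beta> - 1))" for r
  interpret radial_phase_system \<theta> "\<beta> + 1" "\<alpha> - \<beta> - 1" W "\<lambda>r. - r * du r"
    unfolding W_def[abs_def] using solution_radial_phase_system[OF h\<theta>def h1 h2 h3 h4 deriv flux_deriv] .
  have "continuous (at 0 within {0..}) u"
    using deriv by (intro DERIV_continuous) auto
  then have "(u \<longlongrightarrow> u 0) (at_right 0)"
    unfolding continuous_within by (rule tendsto_within_subset) auto
  then have "filterlim W at_bot (at_right 0)"
    unfolding W_def[abs_def] using h3 by (rule filterlim_add_mult_ln_at_bot)
  then have "W r \<noteq> 0"
    using W_neq_zero \<open>0 < r\<close> by blast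
  then show "u r \<noteq> ln (\<theta> powr (\<beta> + 1) * (\<alpha> - \<beta> - 1)) - \<theta> * ln r"
    by (simp add: W_def)
qed

end
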